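(* Let $d=2^L$ for a positive integer $L$, let $n\ge 1$, and let $X^\natural=\mathbf 1 e_1^{\mathsf T}\in\mathbb R^{d\times n}$ (the matrix whose first column is all ones and whose other entries are zero). Suppose each entry of $X^\natural$ is observed independently with probability $p\in(0,1]$, and let $\Omega\subset[d]\times[n]$ be the set of observed positions. Then, with probability at least $\frac12\left(1-(1-p)^d-dp(1-p)^{d-1}\right)$, $X^\natural$ is the unique solution of $$\min_{X\in\mathbb C^{d\times n}}\ \sum_{i=1}^d\big\|\mathcal H\big((e_i^{\mathsf T}FX)^{\mathsf T}\big)\big\|_*\quad\text{subject to}\quad \mathcal P_\Omega(X)=\mathcal P_\Omega(X^\natural).$$ In particular this probability bound tends to $1/2$ as $d\to\infty$ (for fixed $p$).
   Context: $n_1,n_2$ are positive integers with $n_1+n_2=n+1$. For $x=(x_1,\dots,x_n)\in\mathbb C^n$, $\mathcal H(x)\in\mathbb C^{n_1\times n_2}$ is the Hankel matrix with $[\mathcal H(x)]_{j,k}=x_{j+k-1}$. $F\in\mathbb C^{d\times d}$ is the unitary DFT matrix, $F_{jk}=d^{-1/2}e^{-2\pi \mathrm{i}(j-1)(k-1)/d}$; $e_i$ is the $i$-th standard basis vector, so $e_i^{\mathsf T}FX$ is the $i$-th row of $FX$. $\|\cdot\|_*$ is the nuclear norm (sum of singular values). $\mathcal P_\Omega:\mathbb C^{d\times n}\to\mathbb C^{d\times n}$ keeps the entries indexed by $\Omega$ and sets all other entries to zero. *)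

theory Defs
  imports "Jordan_Normal_Form.Char_Poly"
begin

text \<open>Singular values enter via the eigenvalues (with algebraic multiplicity) of
  the Gram matrix A^H A; the nuclear norm is the sum of their square roots,
  i.e. the sum of the singular values of A (extra zero eigenvalues contribute 0).\<close>
definition conj_transpose :: "complex mat \<Rightarrow> complex mat" where
  "conj_transpose A = mat (dim_col A) (dim_row A) (\<lambda>(i,j). cnj (A $$ (j,i)))"

definition nuclear_norm :: "complex mat \<Rightarrow> real" where
  "nuclear_norm A =
     sum_mset (image_mset (\<lambda>z. sqrt (Re z)) (proots (char_poly (conj_transpose A * A))))"

text \<open>Hankel matrix, 0-indexed: entry (j,k) is x (j+k) (paper: x_{j+k-1}, 1-indexed).\<close>
definition hankel :: "nat \<Rightarrow> nat \<Rightarrow> (nat \<Rightarrow> complex) \<Rightarrow> complex mat" where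
  "hankel n1 n2 x = mat n1 n2 (\<lambda>(j,k). x (j + k))"

definition dft_mat :: "nat \<Rightarrow> complex mat" where
  "dft_mat d = mat d d (\<lambda>(j,k).
      exp (- 2 * of_real pi * \<i> * of_nat j * of_nat k / of_nat d) / of_real (sqrt (real d)))"

definition hankel_obj :: "nat \<Rightarrow> nat \<Rightarrow> nat \<Rightarrow> complex mat \<Rightarrow> real" where
  "hankel_obj d n1 n2 X =
     (\<Sum>i<d. nuclear_norm (hankel n1 n2 (\<lambda>k. (dft_mat d * X) $$ (i, k))))"

definition P_Omega :: "(nat \<times> nat) set \<Rightarrow> complex mat \<Rightarrow> complex mat" where
  "P_Omega \<Omega> X = mat (dim_row X) (dim_col X) (\<lambda>ij. if ij \<in> \<Omega> then X $$ ij else 0)"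

definition unique_solution :: "nat \<Rightarrow> nat \<Rightarrow> nat \<Rightarrow> nat \<Rightarrow> (nat \<times> nat) set \<Rightarrow> complex mat \<Rightarrow> bool" where
  "unique_solution d n n1 n2 \<Omega> X0 \<longleftrightarrow>
     {X \<in> carrier_mat d n. P_Omega \<Omega> X = P_Omega \<Omega> X0 \<and>
        (\<forall>Y \<in> carrier_mat d n. P_Omega \<Omega> Y = P_Omega \<Omega> X0 \<longrightarrow>
            hankel_obj d n1 n2 X \<le> hankel_obj d n1 n2 Y)} = {X0}"

definition bernoulli_prob :: "nat \<Rightarrow> nat \<Rightarrow> real \<Rightarrow> ((nat \<times> nat) set \<Rightarrow> bool) \<Rightarrow> real" where
  "bernoulli_prob d n p E =
     (\<Sum>\<Omega> \<in> {\<Omega>. \<Omega> \<subseteq> {0..<d} \<times> {0..<n} \<and> E \<Omega>}.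
        p ^ card \<Omega> * (1 - p) ^ (d * n - card \<Omega>))"

definition X_nat :: "nat \<Rightarrow> nat \<Rightarrow> complex mat" where
  "X_nat d n = mat d n (\<lambda>(j,k). if k = 0 then 1 else 0)"

end

theory Submission
  imports Defs "Jordan_Normal_Form.Schur_Decomposition"
begin

text \<open>Write \<open>Z = F Y\<close> and \<open>\<omega> = exp (2 \<pi> i / d)\<close>. The \<open>(0,0)\<close> entry of the \<open>i\<close>-th Hankel
  matrix is \<open>Z i 0\<close>, and the nuclear norm dominates the Frobenius norm, which dominates \<open>|Z i 0|\<close>.
  Inverting the unitary DFT gives \<open>\<surd>d Y j 0 = \<Sum>i. \<omega>^(i j) Z i 0\<close>, so every feasible \<open>Y\<close> with an
  observed entry \<open>Y j 0 = 1\<close> has objective at least \<open>\<surd>d\<close>, the objective of \<open>X\<^sup>\<natural>\<close>. For a minimiser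
  all these inequalities are equalities: equality with the Frobenius norm kills \<open>Z\<close> outside its
  first column, and equality in the triangle inequality makes \<open>\<omega>^(i j) Z i 0 \<ge> 0\<close> for every
  observed \<open>j\<close>. If an even \<open>j\<^sub>1\<close> and an odd \<open>j\<^sub>2\<close> are observed in the first column, then
  \<open>\<omega>^(i (j\<^sub>1 - j\<^sub>2)) \<noteq> 1\<close> for \<open>0 < i < d = 2^L\<close>, which forces \<open>Z i 0 = 0\<close> for \<open>i \<noteq> 0\<close>, i.e.
  \<open>Y = X\<^sup>\<natural>\<close>. That event has probability \<open>(1 - (1 - p)^(d/2))\<^sup>2\<close>, which dominates the stated
  bound because \<open>4 C(h,k) \<le> C(2h,k)\<close> for \<open>k \<ge> 2\<close>.\<close>

section \<open>Trace, Gram matrices and the nuclear norm\<close>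

definition mat_trace :: "'a::comm_ring_1 mat \<Rightarrow> 'a" where
  "mat_trace M = (\<Sum>i<dim_row M. M $$ (i,i))"

lemma mat_trace_mult_comm:
  assumes "A \<in> carrier_mat m m" "B \<in> carrier_mat m m"
  shows "mat_trace (A * B) = mat_trace (B * A)"
proof -
  have "mat_trace (A * B) = (\<Sum>i<m. \<Sum>l<m. A $$ (i,l) * B $$ (l,i))"
    using assms by (simp add: mat_trace_def scalar_prod_def atLeast0LessThan)
  also have "\<dots> = (\<Sum>l<m. \<Sum>i<m. B $$ (l,i) * A $$ (i,l))"
    by (subst sum.swap) (simp add: mult.commute)
  also have "\<dots> = mat_trace (B * A)"
    using assms by (simp add: mat_trace_def scalar_prod_def atLeast0LessThan)
  finally show ?thesis .
qed

lemma mat_trace_similar: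
  assumes "similar_mat A B"
  shows "mat_trace A = mat_trace B"
proof -
  obtain k P Q where c: "{A,B,P,Q} \<subseteq> carrier_mat k k" and QP: "Q * P = 1\<^sub>m k"
    and A: "A = P * B * Q"
    using similar_matD[OF assms] by blast
  have "mat_trace A = mat_trace (P * (B * Q))" using A c by (simp add: assoc_mult_mat[of P k k B k Q k])
  also have "\<dots> = mat_trace ((B * Q) * P)" using c by (intro mat_trace_mult_comm) auto
  also have "\<dots> = mat_trace (B * (Q * P))" using c by (simp add: assoc_mult_mat[of B k k Q k P k])
  also have "\<dots> = mat_trace B" using c QP by (simp add: right_mult_one_mat[of B k k])
  finally show ?thesis .
qed

lemma proots_char_poly_upper_triangular:
  assumes "T \<in> carrier_mat m m" "upper_triangular T"
  shows "proots (char_poly T) = mset (diag_mat T)"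
proof -
  have "proots (char_poly T) = proots (\<Prod>a\<leftarrow>diag_mat T. [:- a, 1:])"
    by (simp add: char_poly_upper_triangular[OF assms])
  also have "\<dots> = (\<Sum>a\<leftarrow>diag_mat T. {#a#})"
  proof -
    have "0 \<notin> set (map (\<lambda>a. [:- a, 1:]) (diag_mat T))" by auto
    from proots_prod_list[OF this] show ?thesis by (simp add: o_def)
  qed
  also have "\<dots> = mset (diag_mat T)"
    by (induction "diag_mat T") auto
  finally show ?thesis .
qed

lemma sum_proots_char_poly:
  fixes M :: "complex mat"
  assumes M: "M \<in> carrier_mat m m"
  shows "sum_mset (proots (char_poly M)) = mat_trace M"
proof -
  obtain es where "char_poly M = (\<Prod>a\<leftarrow>es. [:- a, 1:])"
    using char_poly_factorized[OF M] by blast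
  then obtain T where T: "T \<in> carrier_mat m m" "upper_triangular T" "similar_mat M T"
    using schur_decomposition_exists[OF M] by blast
  have "sum_mset (proots (char_poly M)) = sum_list (diag_mat T)"
    using char_poly_similar[OF T(3)] proots_char_poly_upper_triangular[OF T(1,2)]
    by (simp add: sum_mset_sum_list)
  also have "\<dots> = mat_trace T"
    using T(1) by (simp add: diag_mat_def mat_trace_def sum_list_sum_nth atLeast0LessThan)
  finally show ?thesis using mat_trace_similar[OF T(3)] by simp
qed

lemma conj_transpose_mult_carrier:
  "A \<in> carrier_mat r c \<Longrightarrow> conj_transpose A * A \<in> carrier_mat c c"
  unfolding conj_transpose_def by (rule mult_carrier_mat[of _ c r]) auto

lemma conj_transpose_mult_index:
  assumes "A \<in> carrier_mat r c" "i < c" "k < c"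
  shows "(conj_transpose A * A) $$ (i,k) = (\<Sum>j<r. cnj (A $$ (j,i)) * A $$ (j,k))"
  using assms by (simp add: conj_transpose_def scalar_prod_def atLeast0LessThan)

lemma sum_cnj_mult_self:
  "(\<Sum>j\<in>S. cnj (f j) * f j) = complex_of_real (\<Sum>j\<in>S. (cmod (f j))\<^sup>2)"
  unfolding of_real_sum by (intro sum.cong refl) (metis complex_norm_square mult.commute)

lemma gram_quadratic_form:
  fixes A :: "complex mat" and v :: "complex vec"
  shows "(\<Sum>l<c. cnj (v$l) * (\<Sum>k<c. (\<Sum>j<r. cnj (A $$ (j,l)) * A $$ (j,k)) * v$k))
       = (\<Sum>j<r. cnj (\<Sum>l<c. A $$ (j,l) * v$l) * (\<Sum>k<c. A $$ (j,k) * v$k))"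
proof -
  have "(\<Sum>l<c. cnj (v$l) * (\<Sum>k<c. (\<Sum>j<r. cnj (A $$ (j,l)) * A $$ (j,k)) * v$k))
      = (\<Sum>l<c. \<Sum>k<c. \<Sum>j<r. cnj (v$l) * cnj (A $$ (j,l)) * A $$ (j,k) * v$k)"
    by (simp add: sum_distrib_left sum_distrib_right mult.assoc)
  also have "\<dots> = (\<Sum>j<r. \<Sum>l<c. \<Sum>k<c. cnj (v$l) * cnj (A $$ (j,l)) * A $$ (j,k) * v$k)"
    by (subst sum.swap) (simp add: sum.swap[of _ "{..<c}" "{..<r}"])
  also have "\<dots> = (\<Sum>j<r. cnj (\<Sum>l<c. A $$ (j,l) * v$l) * (\<Sum>k<c. A $$ (j,k) * v$k))"
    by (simp add: sum_distrib_left sum_distrib_right mult.assoc mult.left_commute mult.commute)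
  finally show ?thesis .
qed

text \<open>For an eigenvector \<open>v\<close> of \<open>A\<^sup>H A\<close>, \<open>z \<parallel>v\<parallel>\<^sup>2 = v\<^sup>H A\<^sup>H A v = \<parallel>A v\<parallel>\<^sup>2\<close>.\<close>
lemma gram_eigenvalue_Re_nonneg:
  assumes A: "A \<in> carrier_mat r c" and z: "eigenvalue (conj_transpose A * A) z"
  shows "0 \<le> Re z"
proof -
  define B where "B = conj_transpose A * A"
  have B: "B \<in> carrier_mat c c" using conj_transpose_mult_carrier[OF A] by (simp add: B_def)
  obtain v where v: "v \<in> carrier_vec c" "v \<noteq> 0\<^sub>v c" "B *\<^sub>v v = z \<cdot>\<^sub>v v"
    using z B unfolding eigenvalue_def eigenvector_def B_def by auto
  have Bv: "(\<Sum>k<c. B $$ (l,k) * v$k) = z * v$l" if "l < c" for l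
  proof -
    have "(B *\<^sub>v v) $ l = (\<Sum>k<c. B $$ (l,k) * v$k)"
      using B v(1) that by (simp add: scalar_prod_def atLeast0LessThan)
    thus ?thesis using v that by simp
  qed
  define S where "S = (\<Sum>l<c. cnj (v$l) * (\<Sum>k<c. B $$ (l,k) * v$k))"
  define N where "N = (\<Sum>l<c. (cmod (v$l))\<^sup>2)"
  define T where "T = (\<Sum>j<r. (cmod (\<Sum>l<c. A $$ (j,l) * v$l))\<^sup>2)"
  have "S = (\<Sum>l<c. z * (cnj (v$l) * v$l))"
    unfolding S_def by (intro sum.cong) (simp_all add: Bv)
  also have "\<dots> = z * complex_of_real N"
    unfolding N_def sum_cnj_mult_self[symmetric] by (simp add: sum_distrib_left)
  finally have "S = z * complex_of_real N" .
  moreover have "S = complex_of_real T"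
  proof -
    have "S = (\<Sum>l<c. cnj (v$l) * (\<Sum>k<c. (\<Sum>j<r. cnj (A $$ (j,l)) * A $$ (j,k)) * v$k))"
      unfolding S_def B_def using A by (intro sum.cong refl) (simp add: conj_transpose_mult_index)
    also have "\<dots> = (\<Sum>j<r. cnj (\<Sum>l<c. A $$ (j,l) * v$l) * (\<Sum>k<c. A $$ (j,k) * v$k))"
      by (rule gram_quadratic_form)
    finally show ?thesis unfolding T_def by (simp only: sum_cnj_mult_self)
  qed
  ultimately have "z * complex_of_real N = complex_of_real T" by simp
  then have "Re z * N = T" by (simp add: complex_eq_iff)
  moreover obtain l where "l < c" "v$l \<noteq> 0"
    using v(1,2) by (metis carrier_vecD eq_vecI index_zero_vec(1,2))
  then have "0 < N"
    unfolding N_def by (intro sum_pos2[of _ l]) auto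
  moreover have "0 \<le> T" unfolding T_def by (intro sum_nonneg) auto
  ultimately show ?thesis by (metis zero_le_mult_iff not_less)
qed

definition frobenius_norm_sq :: "complex mat \<Rightarrow> real" where
  "frobenius_norm_sq A = (\<Sum>k<dim_col A. \<Sum>j<dim_row A. (cmod (A $$ (j,k)))\<^sup>2)"

lemma Re_sum_mset: "Re (sum_mset M) = sum_mset (image_mset Re M)"
  by (induction M) auto

lemma sqrt_sum_mset_le_sum_mset_sqrt:
  "\<forall>x\<in>#M. 0 \<le> x \<Longrightarrow> sqrt (sum_mset M) \<le> sum_mset (image_mset sqrt M)"
proof (induction M)
  case (add x M)
  have "0 \<le> sum_mset M" using add.prems by (induction M) auto
  then have "sqrt (x + sum_mset M) \<le> sqrt x + sqrt (sum_mset M)"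
    using add.prems by (intro sqrt_add_le_add_sqrt) auto
  thus ?case using add by simp
qed simp

text \<open>The squared singular values sum to \<open>tr (A\<^sup>H A) = \<parallel>A\<parallel>\<^sub>F\<^sup>2\<close>, and the square root is subadditive.\<close>
lemma sqrt_frobenius_norm_sq_le_nuclear_norm:
  assumes A: "A \<in> carrier_mat r c"
  shows "sqrt (frobenius_norm_sq A) \<le> nuclear_norm A"
proof -
  define B where "B = conj_transpose A * A"
  have B: "B \<in> carrier_mat c c" using conj_transpose_mult_carrier[OF A] by (simp add: B_def)
  define R where "R = proots (char_poly B)"
  have "sum_mset R = (\<Sum>i<c. B $$ (i,i))"
    unfolding R_def sum_proots_char_poly[OF B] using B by (simp add: mat_trace_def)
  also have "\<dots> = (\<Sum>i<c. \<Sum>j<r. cnj (A $$ (j,i)) * A $$ (j,i))"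
    by (intro sum.cong) (simp_all add: B_def conj_transpose_mult_index[OF A])
  also have "\<dots> = complex_of_real (frobenius_norm_sq A)"
    using A by (simp add: frobenius_norm_sq_def sum_cnj_mult_self of_real_sum)
  finally have frob: "frobenius_norm_sq A = sum_mset (image_mset Re R)"
    by (metis Re_complex_of_real Re_sum_mset)
  have "\<forall>x\<in>#image_mset Re R. 0 \<le> x"
  proof
    fix x assume "x \<in># image_mset Re R"
    then obtain z where z: "z \<in># R" "x = Re z" by auto
    have "char_poly B \<noteq> 0" using degree_monic_char_poly[OF B] by auto
    then have "eigenvalue B z"
      using z(1) eigenvalue_root_char_poly[OF B] by (simp add: R_def)
    thus "0 \<le> x" using gram_eigenvalue_Re_nonneg[OF A] z(2) by (simp add: B_def)
  qed
  then have "sqrt (frobenius_norm_sq A) \<le> sum_mset (image_mset sqrt (image_mset Re R))"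
    unfolding frob by (rule sqrt_sum_mset_le_sum_mset_sqrt)
  also have "\<dots> = nuclear_norm A"
    by (simp add: nuclear_norm_def R_def B_def multiset.map_comp o_def)
  finally show ?thesis .
qed

lemma nuclear_norm_upper_triangular_gram:
  assumes A: "A \<in> carrier_mat r c" and ut: "upper_triangular (conj_transpose A * A)"
  shows "nuclear_norm A = (\<Sum>i<c. sqrt (Re ((conj_transpose A * A) $$ (i,i))))"
proof -
  define B where "B = conj_transpose A * A"
  have B: "B \<in> carrier_mat c c" using conj_transpose_mult_carrier[OF A] by (simp add: B_def)
  have "proots (char_poly B) = mset (diag_mat B)"
    using proots_char_poly_upper_triangular[OF B] ut by (simp add: B_def)
  then have "nuclear_norm A = sum_list (map (\<lambda>z. sqrt (Re z)) (diag_mat B))"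
    unfolding nuclear_norm_def B_def by (metis mset_map sum_mset_sum_list)
  also have "\<dots> = (\<Sum>i<c. sqrt (Re (B $$ (i,i))))"
    using B by (simp add: diag_mat_def sum_list_sum_nth atLeast0LessThan)
  finally show ?thesis by (simp add: B_def)
qed

section \<open>Hankel matrices\<close>

lemma hankel_carrier: "hankel n1 n2 x \<in> carrier_mat n1 n2"
  by (simp add: hankel_def)

lemma hankel_index: "j < n1 \<Longrightarrow> k < n2 \<Longrightarrow> hankel n1 n2 x $$ (j,k) = x (j + k)"
  by (simp add: hankel_def)

lemma frobenius_norm_sq_hankel:
  "frobenius_norm_sq (hankel n1 n2 x) = (\<Sum>(k,j)\<in>{..<n2} \<times> {..<n1}. (cmod (x (j + k)))\<^sup>2)"
proof -
  have "frobenius_norm_sq (hankel n1 n2 x) = (\<Sum>k<n2. \<Sum>j<n1. (cmod (x (j + k)))\<^sup>2)"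
    by (simp add: frobenius_norm_sq_def hankel_def)
  thus ?thesis by (simp add: sum.cartesian_product)
qed

lemma cmod_le_sqrt_frobenius_norm_sq_hankel:
  assumes "0 < n1" "0 < n2"
  shows "cmod (x 0) \<le> sqrt (frobenius_norm_sq (hankel n1 n2 x))"
proof (rule real_le_rsqrt)
  have "(cmod (x 0))\<^sup>2 = (\<Sum>(k,j)\<in>{(0::nat,0::nat)}. (cmod (x (j + k)))\<^sup>2)" by simp
  also have "\<dots> \<le> frobenius_norm_sq (hankel n1 n2 x)"
    unfolding frobenius_norm_sq_hankel using assms by (intro sum_mono2) auto
  finally show "(cmod (x 0))\<^sup>2 \<le> frobenius_norm_sq (hankel n1 n2 x)" .
qed

text \<open>Every \<open>x t\<close> with \<open>t < n = n\<^sub>1 + n\<^sub>2 - 1\<close> occurs in the Hankel matrix, so equality in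
  the previous lemma leaves no room for any other nonzero entry.\<close>
lemma hankel_zero_if_sqrt_frobenius_norm_sq_eq:
  assumes "0 < n1" "0 < n2" "n1 + n2 = n + 1"
    and eq: "sqrt (frobenius_norm_sq (hankel n1 n2 x)) = cmod (x 0)" and t: "0 < t" "t < n"
  shows "x t = 0"
proof -
  define a where "a = min t (n1 - 1)"
  define b where "b = t - a"
  have ab: "(b,a) \<in> {..<n2} \<times> {..<n1}" "(b,a) \<noteq> (0,0)" "a + b = t"
    using assms unfolding a_def b_def by auto
  have "(cmod (x 0))\<^sup>2 + (cmod (x t))\<^sup>2 = (\<Sum>(k,j)\<in>{(0,0),(b,a)}. (cmod (x (j + k)))\<^sup>2)"
    using ab(2,3) by simp
  also have "\<dots> \<le> frobenius_norm_sq (hankel n1 n2 x)"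
    unfolding frobenius_norm_sq_hankel using assms(1,2) ab(1) by (intro sum_mono2) auto
  also have "\<dots> = (cmod (x 0))\<^sup>2"
    using eq frobenius_norm_sq_def by (metis real_sqrt_ge_0_iff real_sqrt_pow2 norm_ge_zero
        zero_le_power2 sum_nonneg)
  finally show ?thesis by simp
qed

lemma nuclear_norm_hankel_single_entry:
  assumes "n1 + n2 = n + 1" "0 < n1" "0 < n2" and zero: "\<And>t. 0 < t \<Longrightarrow> t < n \<Longrightarrow> x t = 0"
  shows "nuclear_norm (hankel n1 n2 x) = cmod (x 0)"
proof -
  define H where "H = hankel n1 n2 x"
  have H: "H \<in> carrier_mat n1 n2" by (simp add: H_def hankel_carrier)
  have x0: "x (j + a) = 0" if "j < n1" "a < n2" "j + a \<noteq> 0" for j a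
    using zero[of "j + a"] that assms(1) by auto
  have gram: "(conj_transpose H * H) $$ (a,b) = (if a = 0 \<and> b = 0 then cnj (x 0) * x 0 else 0)"
    if "a < n2" "b \<le> a" for a b
  proof -
    have "(conj_transpose H * H) $$ (a,b) = (\<Sum>j<n1. cnj (x (j + a)) * x (j + b))"
      using conj_transpose_mult_index[OF H] that by (simp add: H_def hankel_index)
    also have "\<dots> = (\<Sum>j<n1. if j = 0 \<and> a = 0 \<and> b = 0 then cnj (x 0) * x 0 else 0)"
      using x0 that by (intro sum.cong) auto
    finally show ?thesis using assms(2) by simp
  qed
  have "upper_triangular (conj_transpose H * H)"
    using H gram by (auto simp: upper_triangular_def conj_transpose_def)
  then have "nuclear_norm H = (\<Sum>a<n2. sqrt (Re ((conj_transpose H * H) $$ (a,a))))"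
    by (rule nuclear_norm_upper_triangular_gram[OF H])
  also have "\<dots> = (\<Sum>a<n2. if a = 0 then cmod (x 0) else 0)"
    using gram by (intro sum.cong) (auto simp: cmod_def power2_eq_square)
  finally show ?thesis using assms(3) by (simp add: H_def)
qed

section \<open>The discrete Fourier transform\<close>

lemma cis_eq_1_imp_dvd:
  fixes r :: int
  assumes "0 < d" and "cis (2 * pi * of_int r / real d) = 1"
  shows "int d dvd r"
proof -
  have "cos (2 * pi * of_int r / real d) = 1"
    using assms(2) by (metis cis.sel(1) one_complex.sel(1))
  then obtain m :: int where "2 * pi * of_int r / real d = of_int m * 2 * pi"
    using cos_one_2pi_int by blast
  then have "real_of_int r = of_int (m * int d)" using assms(1) by (simp add: field_simps)
  thus ?thesis by (metis of_int_eq_iff dvd_triv_right)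
qed

lemma sum_roots_of_unity:
  fixes m :: int
  assumes d: "0 < d"
  shows "(\<Sum>i<d. cis (2 * pi * real i * of_int m / real d)) = (if int d dvd m then of_nat d else 0)"
proof (cases "int d dvd m")
  case True
  then obtain t where t: "m = int d * t" by blast
  have "cis (2 * pi * real i * of_int m / real d) = 1" for i
  proof -
    have "2 * pi * real i * of_int m / real d = 2 * pi * of_int (int i * t)"
      using d by (simp add: t field_simps)
    thus ?thesis by (simp del: of_int_mult)
  qed
  thus ?thesis using True by simp
next
  case False
  define \<omega> where "\<omega> = cis (2 * pi * of_int m / real d)"
  have "\<omega> \<noteq> 1" unfolding \<omega>_def using cis_eq_1_imp_dvd[OF d, of m] False by blast
  have pow: "cis (2 * pi * real i * of_int m / real d) = \<omega> ^ i" for i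
    unfolding \<omega>_def DeMoivre by (simp add: field_simps)
  have "\<omega> ^ d = cis (2 * pi * real d * of_int m / real d)" by (rule pow[symmetric])
  also have "2 * pi * real d * of_int m / real d = 2 * pi * of_int m" using d by simp
  finally have "\<omega> ^ d = 1" by simp
  thus ?thesis using \<open>\<omega> \<noteq> 1\<close> False by (simp add: pow sum_gp_strict)
qed

lemma dft_mat_carrier: "dft_mat d \<in> carrier_mat d d"
  by (simp add: dft_mat_def)

lemma dft_mat_index:
  assumes "j < d" "k < d"
  shows "dft_mat d $$ (j,k) = cis (- 2 * pi * real j * real k / real d) / complex_of_real (sqrt (real d))"
proof -
  have "exp (- 2 * complex_of_real pi * \<i> * of_nat j * of_nat k / of_nat d)
        = cis (- 2 * pi * real j * real k / real d)"
    by (simp add: cis_conv_exp algebra_simps)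
  thus ?thesis using assms by (simp add: dft_mat_def)
qed

lemma cnj_dft_mat_index:
  assumes "i < d" "j < d"
  shows "cnj (dft_mat d $$ (i,j)) = cis (2 * pi * real i * real j / real d) / complex_of_real (sqrt (real d))"
  using assms by (simp add: dft_mat_index cis_cnj)

lemma complex_of_real_sqrt_mult_self: "complex_of_real (sqrt (real d)) * complex_of_real (sqrt (real d)) = of_nat d"
  by (simp flip: of_real_mult)

lemma dft_mat_unitary:
  assumes d: "0 < d"
  shows "conj_transpose (dft_mat d) * dft_mat d = 1\<^sub>m d"
proof (rule eq_matI)
  fix j k assume "j < dim_row (1\<^sub>m d)" and "k < dim_col (1\<^sub>m d)"
  hence jk: "j < d" "k < d" by auto
  have "cnj (dft_mat d $$ (i,j)) * dft_mat d $$ (i,k)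
      = cis (2 * pi * real i * of_int (int j - int k) / real d) / of_nat d" if "i < d" for i
  proof -
    have "2 * pi * real i * real j / real d + - 2 * pi * real i * real k / real d
        = 2 * pi * real i * of_int (int j - int k) / real d"
      by (simp add: add_divide_distrib[symmetric] diff_divide_distrib[symmetric] right_diff_distrib)
    thus ?thesis using that jk
      by (simp only: cnj_dft_mat_index[OF that jk(1)] dft_mat_index[OF that jk(2)]
          times_divide_times_eq cis_mult complex_of_real_sqrt_mult_self)
  qed
  then have "(conj_transpose (dft_mat d) * dft_mat d) $$ (j,k)
      = (\<Sum>i<d. cis (2 * pi * real i * of_int (int j - int k) / real d)) / of_nat d"
    by (simp add: conj_transpose_mult_index[OF dft_mat_carrier jk] sum_divide_distrib)
  also have "\<dots> = (if int d dvd (int j - int k) then of_nat d else 0) / of_nat d"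
    by (simp only: sum_roots_of_unity[OF d])
  also have "\<dots> = 1\<^sub>m d $$ (j,k)"
  proof -
    have "int d dvd (int j - int k) \<longleftrightarrow> j = k"
    proof
      assume "int d dvd (int j - int k)"
      then have "int j mod int d = int k mod int d" by (simp add: mod_eq_dvd_iff)
      thus "j = k" using jk by (simp flip: of_nat_mod)
    qed simp
    thus ?thesis using jk d by simp
  qed
  finally show "(conj_transpose (dft_mat d) * dft_mat d) $$ (j,k) = 1\<^sub>m d $$ (j,k)" .
qed (simp_all add: conj_transpose_def dft_mat_def)

lemma dft_mat_row_sum:
  assumes d: "0 < d" and i: "i < d"
  shows "(\<Sum>l<d. dft_mat d $$ (i,l)) = (if i = 0 then complex_of_real (sqrt (real d)) else 0)"
proof -
  define s where "s = complex_of_real (sqrt (real d))"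
  have "s \<noteq> 0" using d by (simp add: s_def)
  have "dft_mat d $$ (i,l) = cis (2 * pi * real l * of_int (- int i) / real d) / s" if "l < d" for l
  proof -
    have "- 2 * pi * real i * real l / real d = 2 * pi * real l * of_int (- int i) / real d" by simp
    thus ?thesis by (simp only: dft_mat_index[OF i that] s_def)
  qed
  then have "(\<Sum>l<d. dft_mat d $$ (i,l)) = (\<Sum>l<d. cis (2 * pi * real l * of_int (- int i) / real d)) / s"
    by (simp add: sum_divide_distrib)
  also have "\<dots> = (if int d dvd (- int i) then of_nat d else 0) / s"
    by (simp only: sum_roots_of_unity[OF d])
  also have "\<dots> = (if i = 0 then s else 0)"
  proof -
    have "int d dvd (- int i) \<longleftrightarrow> i = 0" using i by (auto dest: dvd_imp_le)
    moreover have "of_nat d / s = s"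
      using \<open>s \<noteq> 0\<close> complex_of_real_sqrt_mult_self[of d] by (simp add: s_def field_simps)
    ultimately show ?thesis by simp
  qed
  finally show ?thesis by (simp add: s_def)
qed

lemma dft_mat_inverse_index:
  assumes d: "0 < d" and Y: "Y \<in> carrier_mat d n" and "j < d" "t < n"
  shows "Y $$ (j,t) = (\<Sum>i<d. cnj (dft_mat d $$ (i,j)) * (dft_mat d * Y) $$ (i,t))"
proof -
  have FH: "conj_transpose (dft_mat d) \<in> carrier_mat d d" by (simp add: conj_transpose_def dft_mat_def)
  have "Y = (conj_transpose (dft_mat d) * dft_mat d) * Y" using Y by (simp add: dft_mat_unitary[OF d])
  also have "\<dots> = conj_transpose (dft_mat d) * (dft_mat d * Y)"
    using assoc_mult_mat[OF FH dft_mat_carrier Y] .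
  finally have "Y $$ (j,t) = (conj_transpose (dft_mat d) * (dft_mat d * Y)) $$ (j,t)"
    by (rule arg_cong)
  also have "\<dots> = (\<Sum>i<d. cnj (dft_mat d $$ (i,j)) * (dft_mat d * Y) $$ (i,t))"
    using assms Y by (simp add: conj_transpose_def dft_mat_def scalar_prod_def atLeast0LessThan)
  finally show ?thesis .
qed

lemma dft_mat_inverse_column:
  assumes "0 < d" and "Y \<in> carrier_mat d n" "j < d" "0 < n"
  shows "(\<Sum>i<d. cis (2 * pi * real i * real j / real d) * (dft_mat d * Y) $$ (i,0))
       = complex_of_real (sqrt (real d)) * Y $$ (j,0)"
proof -
  have "Y $$ (j,0) = (\<Sum>i<d. cis (2 * pi * real i * real j / real d) * (dft_mat d * Y) $$ (i,0))
      / complex_of_real (sqrt (real d))"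
    using dft_mat_inverse_index[OF assms(1,2,3,4)] assms
    by (simp add: cnj_dft_mat_index sum_divide_distrib)
  moreover have "complex_of_real (sqrt (real d)) \<noteq> 0" using assms(1) by simp
  ultimately show ?thesis by simp
qed

lemma dft_mat_mult_inj:
  assumes "0 < d" "Y \<in> carrier_mat d n" "Y' \<in> carrier_mat d n" "dft_mat d * Y = dft_mat d * Y'"
  shows "Y = Y'"
proof (rule eq_matI)
  fix j t assume "j < dim_row Y'" "t < dim_col Y'"
  then have "j < d" "t < n" using assms(3) by auto
  thus "Y $$ (j,t) = Y' $$ (j,t)"
    using dft_mat_inverse_index[OF assms(1,2) \<open>j < d\<close> \<open>t < n\<close>]
      dft_mat_inverse_index[OF assms(1,3) \<open>j < d\<close> \<open>t < n\<close>] assms(4) by simp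
qed (use assms in auto)

text \<open>This is where \<open>d = 2^L\<close> is used: \<open>\<omega>^(i (j\<^sub>1 - j\<^sub>2)) = 1\<close> would need \<open>2^L\<close> to divide \<open>i\<close>,
  since \<open>j\<^sub>1 - j\<^sub>2\<close> is odd.\<close>
lemma cis_even_ne_cis_odd:
  fixes i j1 j2 :: nat
  assumes "0 < i" "i < 2^L" "even j1" "odd j2"
  shows "cis (2 * pi * real i * real j1 / real (2^L)) \<noteq> cis (2 * pi * real i * real j2 / real (2^L))"
proof
  assume "cis (2 * pi * real i * real j1 / real (2^L)) = cis (2 * pi * real i * real j2 / real (2^L))"
  then have "cis (2 * pi * real i * real j1 / real (2^L) - 2 * pi * real i * real j2 / real (2^L)) = 1"
    by (simp flip: cis_divide)
  moreover have "2 * pi * real i * real j1 / real (2^L) - 2 * pi * real i * real j2 / real (2^L)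
      = 2 * pi * of_int (int i * (int j1 - int j2)) / real (2^L)"
    by (simp add: diff_divide_distrib[symmetric] right_diff_distrib mult.assoc)
  ultimately have "cis (2 * pi * of_int (int i * (int j1 - int j2)) / real (2^L)) = 1"
    by simp
  then have "int (2^L) dvd int i * (int j1 - int j2)"
    by (intro cis_eq_1_imp_dvd) auto
  moreover have "coprime (int (2^L)) (int j1 - int j2)"
    using assms(3,4) by simp
  ultimately have "2^L dvd i"
    by (metis coprime_dvd_mult_left_iff of_nat_dvd_iff)
  thus False using assms(1,2) by (auto dest: dvd_imp_le)
qed

section \<open>The minimisation problem\<close>

lemma X_nat_carrier: "X_nat d n \<in> carrier_mat d n"
  by (simp add: X_nat_def)

lemma dft_mat_mult_X_nat_index:
  assumes "0 < d" "i < d" "t < n"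
  shows "(dft_mat d * X_nat d n) $$ (i,t) = (if i = 0 \<and> t = 0 then complex_of_real (sqrt (real d)) else 0)"
proof -
  have "(dft_mat d * X_nat d n) $$ (i,t) = (if t = 0 then \<Sum>l<d. dft_mat d $$ (i,l) else 0)"
    using assms by (simp add: X_nat_def dft_mat_def scalar_prod_def atLeast0LessThan)
  also have "\<dots> = (if t = 0 then if i = 0 then complex_of_real (sqrt (real d)) else 0 else 0)"
    by (simp only: dft_mat_row_sum[OF assms(1,2)])
  finally show ?thesis by simp
qed

lemma hankel_obj_X_nat:
  assumes "0 < d" "n1 + n2 = n + 1" "0 < n1" "0 < n2"
  shows "hankel_obj d n1 n2 (X_nat d n) = sqrt (real d)"
proof -
  have "hankel_obj d n1 n2 (X_nat d n) = (\<Sum>i<d. cmod ((dft_mat d * X_nat d n) $$ (i,0)))"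
    unfolding hankel_obj_def
    using assms by (intro sum.cong nuclear_norm_hankel_single_entry) (auto simp: dft_mat_mult_X_nat_index)
  also have "\<dots> = (\<Sum>i<d. if i = 0 then sqrt (real d) else 0)"
    using assms by (intro sum.cong) (auto simp: dft_mat_mult_X_nat_index)
  finally show ?thesis using assms(1) by simp
qed

lemma sum_cmod_dft_column_le_hankel_obj:
  assumes "0 < n1" "0 < n2"
  shows "(\<Sum>i<d. cmod ((dft_mat d * Y) $$ (i,0)))
      \<le> (\<Sum>i<d. sqrt (frobenius_norm_sq (hankel n1 n2 (\<lambda>k. (dft_mat d * Y) $$ (i,k)))))"
    and "(\<Sum>i<d. sqrt (frobenius_norm_sq (hankel n1 n2 (\<lambda>k. (dft_mat d * Y) $$ (i,k)))))
      \<le> hankel_obj d n1 n2 Y"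
  using assms unfolding hankel_obj_def
  by (auto intro!: sum_mono cmod_le_sqrt_frobenius_norm_sq_hankel
      sqrt_frobenius_norm_sq_le_nuclear_norm hankel_carrier)

lemma sqrt_le_sum_cmod_dft_column:
  assumes "0 < d" "Y \<in> carrier_mat d n" "j < d" "0 < n" "Y $$ (j,0) = 1"
  shows "sqrt (real d) \<le> (\<Sum>i<d. cmod ((dft_mat d * Y) $$ (i,0)))"
proof -
  have "sqrt (real d) = cmod (\<Sum>i<d. cis (2 * pi * real i * real j / real d) * (dft_mat d * Y) $$ (i,0))"
    using dft_mat_inverse_column[OF assms(1-4)] assms(5) by simp
  also have "\<dots> \<le> (\<Sum>i<d. cmod ((dft_mat d * Y) $$ (i,0)))"
    by (rule order_trans[OF norm_sum]) (simp add: norm_mult)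
  finally show ?thesis .
qed

lemma sum_eq_sum_cmod_imp_nonneg:
  fixes a :: "'a \<Rightarrow> complex"
  assumes S: "finite S" and sum: "(\<Sum>i\<in>S. a i) = complex_of_real s"
    and le: "(\<Sum>i\<in>S. cmod (a i)) \<le> s" and i: "i \<in> S"
  shows "a i = complex_of_real (cmod (a i))"
proof -
  have "(\<Sum>i\<in>S. Re (a i)) = (\<Sum>i\<in>S. cmod (a i))"
  proof (rule antisym)
    show "(\<Sum>i\<in>S. Re (a i)) \<le> (\<Sum>i\<in>S. cmod (a i))" by (intro sum_mono complex_Re_le_cmod)
    show "(\<Sum>i\<in>S. cmod (a i)) \<le> (\<Sum>i\<in>S. Re (a i))"
      using le arg_cong[OF sum, of Re] by (simp add: Re_sum)
  qed
  then have Re: "Re (a i) = cmod (a i)" using sum_mono_inv[OF _ complex_Re_le_cmod i S] by blast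
  then have "Im (a i) = 0" by (intro Im_eq_0) simp
  thus ?thesis using Re by (simp add: complex_eq_iff)
qed

lemma dft_column_phase_aligned:
  assumes "0 < d" "Y \<in> carrier_mat d n" "j < d" "0 < n" "Y $$ (j,0) = 1" "i < d"
    and le: "(\<Sum>i<d. cmod ((dft_mat d * Y) $$ (i,0))) \<le> sqrt (real d)"
  shows "cis (2 * pi * real i * real j / real d) * (dft_mat d * Y) $$ (i,0)
       = complex_of_real (cmod ((dft_mat d * Y) $$ (i,0)))"
  using sum_eq_sum_cmod_imp_nonneg[of "{..<d}" "\<lambda>i. cis (2 * pi * real i * real j / real d) * (dft_mat d * Y) $$ (i,0)"]
    dft_mat_inverse_column[OF assms(1-4)] assms by (simp add: norm_mult)

lemma dft_column_concentrated:
  assumes d: "d = 2^L" and Y: "Y \<in> carrier_mat d n" "0 < n"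
    and j: "j1 < d" "j2 < d" "even j1" "odd j2" "Y $$ (j1,0) = 1" "Y $$ (j2,0) = 1"
    and le: "(\<Sum>i<d. cmod ((dft_mat d * Y) $$ (i,0))) \<le> sqrt (real d)"
    and i: "0 < i" "i < d"
  shows "(dft_mat d * Y) $$ (i,0) = 0"
proof (rule ccontr)
  assume nz: "(dft_mat d * Y) $$ (i,0) \<noteq> 0"
  have "0 < d" using d by simp
  note aligned = dft_column_phase_aligned[OF this Y(1) _ Y(2) _ i(2) le]
  have "cis (2 * pi * real i * real j1 / real d) * (dft_mat d * Y) $$ (i,0)
      = cis (2 * pi * real i * real j2 / real d) * (dft_mat d * Y) $$ (i,0)"
    using aligned[OF j(1,5)] aligned[OF j(2,6)] by simp
  then have "cis (2 * pi * real i * real j1 / real d) = cis (2 * pi * real i * real j2 / real d)"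
    using mult_right_cancel[OF nz] by blast
  thus False using cis_even_ne_cis_odd[OF i(1) _ j(3,4)] i d by simp
qed

lemma hankel_obj_minimiser_eq_X_nat:
  assumes d: "d = 2^L" and Y: "Y \<in> carrier_mat d n"
    and nn: "n1 + n2 = n + 1" "0 < n1" "0 < n2"
    and j: "j1 < d" "j2 < d" "even j1" "odd j2" "Y $$ (j1,0) = 1" "Y $$ (j2,0) = 1"
    and opt: "hankel_obj d n1 n2 Y \<le> sqrt (real d)"
  shows "Y = X_nat d n"
proof -
  define Z where "Z = dft_mat d * Y"
  define c where "c i = cmod (Z $$ (i,0))" for i
  define f where "f i = sqrt (frobenius_norm_sq (hankel n1 n2 (\<lambda>k. Z $$ (i,k))))" for i
  have d0: "0 < d" and n0: "0 < n" using d nn by auto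
  have "sqrt (real d) \<le> (\<Sum>i<d. c i)" "(\<Sum>i<d. c i) \<le> (\<Sum>i<d. f i)"
      "(\<Sum>i<d. f i) \<le> hankel_obj d n1 n2 Y"
    using sqrt_le_sum_cmod_dft_column[OF d0 Y j(1) n0 j(5)]
      sum_cmod_dft_column_le_hankel_obj[OF nn(2,3), of d Y]
    unfolding c_def f_def Z_def by simp_all
  then have sum_c: "(\<Sum>i<d. c i) = sqrt (real d)" and sum_f: "(\<Sum>i<d. c i) = (\<Sum>i<d. f i)"
    using opt by linarith+
  have c_le_f: "c i \<le> f i" for i
    unfolding c_def f_def using nn by (intro cmod_le_sqrt_frobenius_norm_sq_hankel)
  have Z_row: "Z $$ (i,t) = 0" if "i < d" "0 < t" "t < n" for i t
  proof -
    have "c i = f i" using sum_mono_inv[OF sum_f c_le_f] that by simp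
    then have "sqrt (frobenius_norm_sq (hankel n1 n2 (\<lambda>k. Z $$ (i,k)))) = cmod (Z $$ (i,0))"
      by (simp add: c_def f_def)
    from hankel_zero_if_sqrt_frobenius_norm_sq_eq[OF nn(2,3,1) this that(2,3)] show ?thesis .
  qed
  have "(\<Sum>i<d. cmod ((dft_mat d * Y) $$ (i,0))) \<le> sqrt (real d)"
    using sum_c by (simp add: c_def Z_def)
  then have Z_col: "Z $$ (i,0) = 0" if "0 < i" "i < d" for i
    unfolding Z_def using dft_column_concentrated[OF d Y n0 j] that by blast
  have "Z $$ (0,0) = (\<Sum>i<d. if i = 0 then Z $$ (0,0) else 0)"
    using d0 by simp
  also have "\<dots> = (\<Sum>i<d. cis (2 * pi * real i * real j1 / real d) * Z $$ (i,0))"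
    using Z_col by (intro sum.cong) auto
  also have "\<dots> = complex_of_real (sqrt (real d))"
    using dft_mat_inverse_column[OF d0 Y j(1) n0] j(5) by (simp add: Z_def)
  finally have Z00: "Z $$ (0,0) = complex_of_real (sqrt (real d))" .
  have "Z = dft_mat d * X_nat d n"
  proof (rule eq_matI)
    fix i t assume "i < dim_row (dft_mat d * X_nat d n)" "t < dim_col (dft_mat d * X_nat d n)"
    then have it: "i < d" "t < n" by (simp_all add: dft_mat_def X_nat_def)
    show "Z $$ (i,t) = (dft_mat d * X_nat d n) $$ (i,t)"
      unfolding dft_mat_mult_X_nat_index[OF d0 it] using it Z00 Z_row Z_col
      by (cases "t = 0"; cases "i = 0") auto
  qed (use Y in \<open>simp_all add: Z_def dft_mat_def X_nat_def\<close>)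
  thus ?thesis using dft_mat_mult_inj[OF d0 Y X_nat_carrier] by (simp add: Z_def)
qed

lemma unique_solution_X_nat:
  assumes d: "d = 2^L" and nn: "n1 + n2 = n + 1" "0 < n1" "0 < n2"
    and j: "j1 < d" "j2 < d" "even j1" "odd j2" "(j1,0) \<in> \<Omega>" "(j2,0) \<in> \<Omega>"
  shows "unique_solution d n n1 n2 \<Omega> (X_nat d n)"
proof -
  have d0: "0 < d" and n0: "0 < n" using d nn by auto
  have observed: "Y $$ (j,0) = 1"
    if "Y \<in> carrier_mat d n" "P_Omega \<Omega> Y = P_Omega \<Omega> (X_nat d n)" "(j,0) \<in> \<Omega>" "j < d" for Y j
  proof -
    have "Y $$ (j,0) = P_Omega \<Omega> Y $$ (j,0)" using that(1,3,4) n0 by (simp add: P_Omega_def)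
    also have "\<dots> = P_Omega \<Omega> (X_nat d n) $$ (j,0)" using that(2) by simp
    also have "\<dots> = 1" using that n0 by (simp add: P_Omega_def X_nat_def)
    finally show ?thesis .
  qed
  have lower: "sqrt (real d) \<le> hankel_obj d n1 n2 Y"
    if "Y \<in> carrier_mat d n" "P_Omega \<Omega> Y = P_Omega \<Omega> (X_nat d n)" for Y
    using sqrt_le_sum_cmod_dft_column[OF d0 that(1) j(1) n0 observed[OF that j(5,1)]]
      sum_cmod_dft_column_le_hankel_obj[OF nn(2,3), of d Y] by linarith
  have objX: "hankel_obj d n1 n2 (X_nat d n) = sqrt (real d)"
    by (rule hankel_obj_X_nat[OF d0 nn])
  show ?thesis
    unfolding unique_solution_def
  proof (intro equalityI subsetI)
    fix X assume "X \<in> {X \<in> carrier_mat d n. P_Omega \<Omega> X = P_Omega \<Omega> (X_nat d n) \<and>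
        (\<forall>Y\<in>carrier_mat d n. P_Omega \<Omega> Y = P_Omega \<Omega> (X_nat d n) \<longrightarrow>
            hankel_obj d n1 n2 X \<le> hankel_obj d n1 n2 Y)}"
    then have X: "X \<in> carrier_mat d n" "P_Omega \<Omega> X = P_Omega \<Omega> (X_nat d n)"
      and "hankel_obj d n1 n2 X \<le> sqrt (real d)"
      using X_nat_carrier objX by auto
    then show "X \<in> {X_nat d n}"
      using hankel_obj_minimiser_eq_X_nat[OF d X(1) nn j(1-4)
          observed[OF X j(5,1)] observed[OF X j(6,2)]] by simp
  qed (use X_nat_carrier lower objX in auto)
qed

section \<open>The probability of the good event\<close>

definition subset_weight :: "real \<Rightarrow> 'a set \<Rightarrow> 'a set \<Rightarrow> real" where
  "subset_weight p U A = p ^ card A * (1 - p) ^ (card U - card A)"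

lemma bernoulli_prob_eq_sum_subset_weight:
  "bernoulli_prob d n p E
     = (\<Sum>\<Omega> | \<Omega> \<subseteq> {0..<d} \<times> {0..<n} \<and> E \<Omega>. subset_weight p ({0..<d} \<times> {0..<n}) \<Omega>)"
  by (simp add: bernoulli_prob_def subset_weight_def)

lemma sum_subset_weight:
  assumes "finite U"
  shows "(\<Sum>A | A \<subseteq> U. subset_weight p U A) = 1"
proof -
  have "1 = (\<Prod>x\<in>U. p + (1 - p))" by simp
  also have "\<dots> = (\<Sum>A\<in>Pow U. (\<Prod>x\<in>A. p) * (\<Prod>x\<in>U - A. (1 - p)))"
    by (rule prod_add[OF assms])
  also have "\<dots> = (\<Sum>A\<in>Pow U. subset_weight p U A)"
  proof (intro sum.cong refl)
    fix A assume "A \<in> Pow U"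
    moreover from this have "finite A" using assms finite_subset by blast
    ultimately show "(\<Prod>x\<in>A. p) * (\<Prod>x\<in>U - A. (1 - p)) = subset_weight p U A"
      using assms by (simp add: subset_weight_def card_Diff_subset)
  qed
  finally show ?thesis by (simp add: Pow_def)
qed

lemma sum_nonempty_subset_weight:
  assumes "finite U"
  shows "(\<Sum>A | A \<subseteq> U \<and> A \<noteq> {}. subset_weight p U A) = 1 - (1 - p) ^ card U"
proof -
  have "{A. A \<subseteq> U} = insert {} {A. A \<subseteq> U \<and> A \<noteq> {}}" by auto
  moreover have "finite {A. A \<subseteq> U \<and> A \<noteq> {}}" using assms by simp
  ultimately show ?thesis
    using sum_subset_weight[OF assms, of p] by (simp add: subset_weight_def)
qed

lemma sum_subset_weight_Un:
  assumes U: "finite U" and V: "finite V" and UV: "U \<inter> V = {}"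
  shows "(\<Sum>W | W \<subseteq> U \<union> V \<and> P (W \<inter> U) \<and> R (W \<inter> V). subset_weight p (U \<union> V) W)
       = (\<Sum>A | A \<subseteq> U \<and> P A. subset_weight p U A) * (\<Sum>B | B \<subseteq> V \<and> R B. subset_weight p V B)"
proof -
  define SA where "SA = {A. A \<subseteq> U \<and> P A}"
  define SB where "SB = {B. B \<subseteq> V \<and> R B}"
  define SW where "SW = {W. W \<subseteq> U \<union> V \<and> P (W \<inter> U) \<and> R (W \<inter> V)}"
  have split: "(A \<union> B) \<inter> U = A" "(A \<union> B) \<inter> V = B" if "A \<subseteq> U" "B \<subseteq> V" for A B
    using that UV by auto
  have bij: "bij_betw (\<lambda>(A,B). A \<union> B) (SA \<times> SB) SW"
    by (rule bij_betwI[where g = "\<lambda>W. (W \<inter> U, W \<inter> V)"])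
      (use UV in \<open>auto simp: SA_def SB_def SW_def split\<close>)
  have weight: "subset_weight p (U \<union> V) (A \<union> B) = subset_weight p U A * subset_weight p V B"
    if "A \<subseteq> U" "B \<subseteq> V" for A B
  proof -
    have "finite A" "finite B" using that U V finite_subset by auto
    then have cAB: "card (A \<union> B) = card A + card B" and "card (U \<union> V) = card U + card V"
      using card_Un_disjoint U V UV that by blast+
    moreover have "card A \<le> card U" "card B \<le> card V" using card_mono U V that by auto
    ultimately have "card (U \<union> V) - card (A \<union> B) = (card U - card A) + (card V - card B)"
      by simp
    then show ?thesis using cAB by (simp add: subset_weight_def power_add mult_ac)
  qed
  have "(\<Sum>W\<in>SW. subset_weight p (U \<union> V) W)
      = (\<Sum>(A,B)\<in>SA \<times> SB. subset_weight p (U \<union> V) (A \<union> B))"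
    using sum.reindex_bij_betw[OF bij, of "subset_weight p (U \<union> V)"] by (simp add: case_prod_unfold)
  also have "\<dots> = (\<Sum>(A,B)\<in>SA \<times> SB. subset_weight p U A * subset_weight p V B)"
    by (intro sum.cong) (auto simp: SA_def SB_def weight)
  also have "\<dots> = (\<Sum>A\<in>SA. subset_weight p U A) * (\<Sum>B\<in>SB. subset_weight p V B)"
    by (simp add: sum_product sum.cartesian_product)
  finally show ?thesis by (simp add: SW_def SA_def SB_def)
qed

lemma sum_subset_weight_Un_left:
  assumes "finite U" "finite V" "U \<inter> V = {}"
  shows "(\<Sum>W | W \<subseteq> U \<union> V \<and> P (W \<inter> U). subset_weight p (U \<union> V) W)
       = (\<Sum>A | A \<subseteq> U \<and> P A. subset_weight p U A)"
  using sum_subset_weight_Un[OF assms, where P = P and R = "\<lambda>_. True" and p = p]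
    sum_subset_weight[OF assms(2), of p]
  by simp

lemma bernoulli_prob_mono:
  assumes "0 \<le> p" "p \<le> 1" and "\<And>\<Omega>. \<Omega> \<subseteq> {0..<d} \<times> {0..<n} \<Longrightarrow> E \<Omega> \<Longrightarrow> E' \<Omega>"
  shows "bernoulli_prob d n p E \<le> bernoulli_prob d n p E'"
  unfolding bernoulli_prob_def using assms
  by (intro sum_mono2) (auto intro: finite_subset[of _ "Pow ({0..<d} \<times> {0..<n})"])

lemma bernoulli_prob_even_odd_in_first_column:
  assumes dh: "d = 2 * h" and n: "0 < n"
  shows "bernoulli_prob d n p (\<lambda>\<Omega>. (\<exists>j1<d. even j1 \<and> (j1,0) \<in> \<Omega>) \<and> (\<exists>j2<d. odd j2 \<and> (j2,0) \<in> \<Omega>))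
       = (1 - (1 - p) ^ h)\<^sup>2"
proof -
  define Ev where "Ev = (\<lambda>j. (j, 0::nat)) ` {j. j < d \<and> even j}"
  define Od where "Od = (\<lambda>j. (j, 0::nat)) ` {j. j < d \<and> odd j}"
  define W where "W = {0..<d} \<times> {0..<n}"
  define R where "R = W - (Ev \<union> Od)"
  have fin: "finite Ev" "finite Od" "finite R" by (simp_all add: Ev_def Od_def R_def W_def)
  have W: "W = (Ev \<union> Od) \<union> R" using n by (auto simp: Ev_def Od_def R_def W_def)
  have "card {j. j < 2 * h \<and> even j} = h" "card {j. j < 2 * h \<and> odd j} = h"
  proof -
    have "{j. j < 2 * h \<and> even j} = (\<lambda>k. 2 * k) ` {..<h}" by (auto elim!: evenE)
    moreover have "{j. j < 2 * h \<and> odd j} = (\<lambda>k. 2 * k + 1) ` {..<h}" by (auto elim!: oddE)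
    ultimately show "card {j. j < 2 * h \<and> even j} = h" "card {j. j < 2 * h \<and> odd j} = h"
      by (simp_all add: card_image inj_on_def)
  qed
  then have card: "card Ev = h" "card Od = h"
    by (simp_all add: Ev_def Od_def dh card_image inj_on_def)
  have "bernoulli_prob d n p (\<lambda>\<Omega>. (\<exists>j1<d. even j1 \<and> (j1,0) \<in> \<Omega>) \<and> (\<exists>j2<d. odd j2 \<and> (j2,0) \<in> \<Omega>))
      = (\<Sum>\<Omega> | \<Omega> \<subseteq> (Ev \<union> Od) \<union> R \<and> \<Omega> \<inter> (Ev \<union> Od) \<inter> Ev \<noteq> {} \<and> \<Omega> \<inter> (Ev \<union> Od) \<inter> Od \<noteq> {}.
           subset_weight p ((Ev \<union> Od) \<union> R) \<Omega>)"
    unfolding bernoulli_prob_eq_sum_subset_weight W_def[symmetric] W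
    by (intro sum.cong) (auto simp: Ev_def Od_def)
  also have "\<dots> = (\<Sum>A | A \<subseteq> Ev \<union> Od \<and> A \<inter> Ev \<noteq> {} \<and> A \<inter> Od \<noteq> {}. subset_weight p (Ev \<union> Od) A)"
    using fin sum_subset_weight_Un_left[where U = "Ev \<union> Od" and V = R and p = p
        and P = "\<lambda>A. A \<inter> Ev \<noteq> {} \<and> A \<inter> Od \<noteq> {}"]
    by (auto simp: R_def)
  also have "\<dots> = (\<Sum>A | A \<subseteq> Ev \<and> A \<noteq> {}. subset_weight p Ev A) * (\<Sum>B | B \<subseteq> Od \<and> B \<noteq> {}. subset_weight p Od B)"
    using fin by (intro sum_subset_weight_Un) (auto simp: Ev_def Od_def)
  finally show ?thesis
    using fin card by (simp add: sum_nonempty_subset_weight power2_eq_square)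
qed

lemma two_pow_mult_choose_le_choose_double: "2 ^ k * (h choose k) \<le> (2 * h) choose k"
proof (induction k)
  case (Suc k)
  have step: "Suc k * (m choose Suc k) = (m - k) * (m choose k)" for m
    using binomial_absorption[of k m] binomial_absorb_comp[of m k] by simp
  have "Suc k * (2 ^ Suc k * (h choose Suc k)) = 2 * 2 ^ k * (Suc k * (h choose Suc k))"
    by (simp only: power_Suc mult_ac)
  also have "\<dots> = 2 * (h - k) * (2 ^ k * (h choose k))"
    by (simp only: step mult_ac)
  also have "\<dots> \<le> (2 * h - k) * ((2 * h) choose k)"
    using Suc.IH by (intro mult_le_mono) auto
  also have "\<dots> = Suc k * ((2 * h) choose Suc k)" by (rule step[symmetric])
  finally show ?case by (simp only: mult_le_cancel1)
qed simp

lemma binomial_sum_power_half: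
  fixes p q :: real
  assumes "p + q = 1"
  shows "q ^ h = (\<Sum>k\<le>2*h. real (h choose k) * (p ^ k * q ^ (2*h - k)))"
proof -
  have "q ^ h = (\<Sum>k\<le>h. real (h choose k) * p ^ k * q ^ (h - k)) * q ^ h"
    using binomial_ring[of p q h] assms by simp
  also have "\<dots> = (\<Sum>k\<le>h. real (h choose k) * (p ^ k * q ^ (2*h - k)))"
    unfolding sum_distrib_right
    by (intro sum.cong) (auto simp: mult_2 mult.assoc simp flip: power_add)
  also have "\<dots> = (\<Sum>k\<le>2*h. real (h choose k) * (p ^ k * q ^ (2*h - k)))"
    by (rule sum.mono_neutral_left) auto
  finally show ?thesis .
qed

text \<open>Probabilistic reading: the left side is half the probability of at least two successes
  among \<open>2h\<close> Bernoulli(\<open>p\<close>) trials, the right side the probability of a success in each half.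
  Twice the difference of the two sides, expanded in the basis \<open>p^k q^(2h-k)\<close> with \<open>q = 1 - p\<close>,
  has coefficients \<open>C(2h,k) - 4 C(h,k) \<ge> 0\<close> for \<open>k \<ge> 2\<close> and \<open>0\<close> for \<open>k \<le> 1\<close>.\<close>
lemma half_prob_two_successes_le:
  fixes p :: real
  assumes p: "0 < p" "p \<le> 1" and h: "1 \<le> h"
  shows "(1 - (1-p)^(2*h) - real (2*h) * p * (1-p)^(2*h-1)) / 2 \<le> (1 - (1-p)^h)\<^sup>2"
proof -
  define q where "q = 1 - p"
  define t where "t k = p ^ k * q ^ (2*h - k)" for k
  define e where "e k = (real ((2*h) choose k) - 4 * real (h choose k)) * t k" for k
  have "(\<Sum>k\<le>2*h. real ((2*h) choose k) * t k) = 1"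
    using binomial_ring[of p q "2*h"] by (simp add: q_def t_def mult.assoc)
  moreover have "(\<Sum>k\<le>2*h. real (h choose k) * t k) = q ^ h"
    using binomial_sum_power_half[of p q h] by (simp add: q_def t_def)
  moreover have "(\<Sum>k\<le>2*h. e k)
      = (\<Sum>k\<le>2*h. real ((2*h) choose k) * t k) - 4 * (\<Sum>k\<le>2*h. real (h choose k) * t k)"
    unfolding e_def by (simp add: left_diff_distrib sum_subtractf sum_distrib_left mult.assoc)
  ultimately have "(\<Sum>k\<le>2*h. e k) = 1 - 4 * q ^ h" by simp
  moreover have "{..2*h} = insert 0 (insert 1 {2..2*h})" using h by auto
  moreover have "0 \<le> (\<Sum>k\<in>{2..2*h}. e k)"
  proof (intro sum_nonneg)
    fix k assume "k \<in> {2..2*h}"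
    then have "4 * (h choose k) \<le> 2 ^ k * (h choose k)"
      using power_increasing[of 2 k "2::nat"] by simp
    then have "4 * real (h choose k) \<le> real ((2*h) choose k)"
      using two_pow_mult_choose_le_choose_double[of k h] by linarith
    thus "0 \<le> e k" using p by (simp add: e_def t_def q_def)
  qed
  ultimately have "0 \<le> 1 - 4 * q ^ h + 3 * q ^ (2*h) + real (2*h) * p * q ^ (2*h - 1)"
    by (simp add: e_def t_def algebra_simps)
  moreover have "(1 - q ^ h)\<^sup>2 = 1 - 2 * q ^ h + q ^ (2*h)"
    by (simp add: power2_diff power_mult mult.commute)
  ultimately show ?thesis by (simp add: q_def field_simps)
qed

lemma tendsto_half_prob_two_successes:
  fixes p :: real
  assumes "0 < p" "p \<le> 1"
  shows "(\<lambda>m::nat. (1 - (1 - p) ^ m - real m * p * (1 - p) ^ (m - 1)) / 2) \<longlonglongrightarrow> 1 / 2"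
proof -
  define q where "q = 1 - p"
  have q: "norm q < 1" using assms by (simp add: q_def)
  have "(\<lambda>m. real (Suc m) * p * q ^ (Suc m - 1)) \<longlonglongrightarrow> 0"
    using tendsto_mult_right_zero[OF tendsto_add_zero[OF powser_times_n_limit_0[OF q]
          LIMSEQ_power_zero[OF q]], of p]
    by (simp add: algebra_simps)
  then have lin: "(\<lambda>m. real m * p * q ^ (m - 1)) \<longlonglongrightarrow> 0"
    by (rule LIMSEQ_imp_Suc)
  have "(\<lambda>m::nat. (1 - q ^ m - real m * p * q ^ (m - 1)) / 2) \<longlonglongrightarrow> (1 - 0 - 0) / 2"
    by (intro tendsto_intros LIMSEQ_power_zero[OF q] lin) (use q in auto)
  thus ?thesis by (simp add: q_def)
qed

theorem theorem1:
  fixes L n n1 n2 d :: nat and p :: real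
  assumes "L > 0" and "d = 2 ^ L" and "n \<ge> 1"
    and "n1 > 0" and "n2 > 0" and "n1 + n2 = n + 1"
    and "0 < p" and "p \<le> 1"
  shows "bernoulli_prob d n p (\<lambda>\<Omega>. unique_solution d n n1 n2 \<Omega> (X_nat d n))
           \<ge> (1 - (1 - p) ^ d - real d * p * (1 - p) ^ (d - 1)) / 2
       \<and> (\<lambda>m::nat. (1 - (1 - p) ^ m - real m * p * (1 - p) ^ (m - 1)) / 2)
           \<longlonglongrightarrow> 1 / 2"
proof -
  define h where "h = (2::nat) ^ (L - 1)"
  have dh: "d = 2 * h" using assms(1,2) by (simp add: h_def flip: power_Suc)
  have "(1 - (1 - p) ^ d - real d * p * (1 - p) ^ (d - 1)) / 2 \<le> (1 - (1 - p) ^ h)\<^sup>2"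
    using half_prob_two_successes_le[OF assms(7,8), of h] dh by (simp add: h_def)
  also have "\<dots> = bernoulli_prob d n p
      (\<lambda>\<Omega>. (\<exists>j1<d. even j1 \<and> (j1,0) \<in> \<Omega>) \<and> (\<exists>j2<d. odd j2 \<and> (j2,0) \<in> \<Omega>))"
    using assms(3) by (simp add: bernoulli_prob_even_odd_in_first_column[OF dh])
  also have "\<dots> \<le> bernoulli_prob d n p (\<lambda>\<Omega>. unique_solution d n n1 n2 \<Omega> (X_nat d n))"
    using assms by (intro bernoulli_prob_mono) (auto intro: unique_solution_X_nat)
  finally show ?thesis using tendsto_half_prob_two_successes[OF assms(7,8)] by simp
qed

end
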